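(* Let $K$ be a field, let $R$ be a $K$-algebra and let $A$ be a right double Ore extension of $R$ with generating variables $x_1,x_2$, relation $$x_2x_1=p_{12}x_1x_2+p_{11}x_1^2+\tau_1x_1+\tau_2x_2+\tau_0\qquad(p_{12},p_{11}\in K,\ \tau_0,\tau_1,\tau_2\in R),$$ and associated maps $\sigma=(\sigma_{ij})\colon R\to M_2(R)$ and $\delta=(\delta_1,\delta_2)^T\colon R\to R^{\oplus 2}$. Suppose that $p_{11}=0$, $p_{12}\neq 0$, $\sigma_{12}=\sigma_{21}=0$ (i.e. $\sigma=\left(\begin{smallmatrix}\sigma_{11}&0\\0&\sigma_{22}\end{smallmatrix}\right)$), and $\sigma_{11}(r)\neq 0$, $\sigma_{22}(r)\neq 0$ for all $r\in R\setminus\{0\}$. Then $A$ is a skew PBW extension of $R$ (in the variables $x_1,x_2$).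
   Context: All algebras are over a field $K$. A $K$-algebra $B$ containing $R$ as a subring is a right double Ore extension of $R$ if: (1) $B$ is generated by $R$ and two elements $x_1,x_2$; (2) $x_2x_1=p_{12}x_1x_2+p_{11}x_1^2+\tau_1x_1+\tau_2x_2+\tau_0$ with $p_{12},p_{11}\in K$, $\tau_0,\tau_1,\tau_2\in R$; (3) $B$ is a free left $R$-module with basis $\{x_1^{a}x_2^{b}: a,b\ge 0\}$; (4) $x_1R+x_2R\subseteq Rx_1+Rx_2+R$. By (3),(4) there are uniquely determined $K$-linear maps $\sigma_{ij},\delta_i\colon R\to R$ with $x_ir=\sigma_{i1}(r)x_1+\sigma_{i2}(r)x_2+\delta_i(r)$ for $i=1,2$, $r\in R$; one writes $\sigma=(\sigma_{ij})\colon R\to M_2(R)$, $\delta=(\delta_1,\delta_2)^T$, $P=\{p_{12},p_{11}\}$. A ring $A$ is a skew PBW extension of a ring $R$ in $x_1,\dots,x_n$ if: (i) $R\subseteq A$; (ii) $A$ is a free left $R$-module with basis the standard monomials $x_1^{\alpha_1}\cdots x_n^{\alpha_n}$, $\alpha\in\mathbb N^n$ (with $x_1^0\cdots x_n^0=1$); (iii) for each $i$ and each $r\in R\setminus\{0\}$ there is $c_{i,r}\in R\setminus\{0\}$ with $x_ir-c_{i,r}x_i\in R$; (iv) for all $i,j$ there is $c_{i,j}\in R\setminus\{0\}$ with $x_jx_i-c_{i,j}x_ix_j\in R+Rx_1+\cdots+Rx_n$. *)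

theory Defs
  imports Main
begin

text \<open>Rings are modelled as a type class ring_1 (the ambient algebra A);
  a subring R is a subset of A closed under the ring operations.\<close>

definition is_subring :: "'a::ring_1 set \<Rightarrow> bool" where
  "is_subring R \<longleftrightarrow> 0 \<in> R \<and> 1 \<in> R \<and>
     (\<forall>a\<in>R. \<forall>b\<in>R. a + b \<in> R \<and> - a \<in> R \<and> a * b \<in> R)"

definition gen_subring :: "'a::ring_1 set \<Rightarrow> 'a set" where
  "gen_subring S = \<Inter>{T. is_subring T \<and> S \<subseteq> T}"

definition K_algebra_emb :: "('k::field \<Rightarrow> 'a::ring_1) \<Rightarrow> 'a set \<Rightarrow> bool" where
  "K_algebra_emb emb R \<longleftrightarrow>
     (\<forall>a b. emb (a + b) = emb a + emb b \<and> emb (a * b) = emb a * emb b) \<and>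
     emb 1 = 1 \<and> (\<forall>c. emb c \<in> R) \<and> (\<forall>c y. emb c * y = y * emb c)"

definition free_left_basis :: "'a::ring_1 set \<Rightarrow> 'i set \<Rightarrow> ('i \<Rightarrow> 'a) \<Rightarrow> bool" where
  "free_left_basis R I m \<longleftrightarrow>
     (\<forall>y. \<exists>c. finite {i\<in>I. c i \<noteq> 0} \<and> (\<forall>i\<in>I. c i \<in> R) \<and>
            y = (\<Sum>i\<in>{i\<in>I. c i \<noteq> 0}. c i * m i)) \<and>
     (\<forall>c. finite {i\<in>I. c i \<noteq> 0} \<and> (\<forall>i\<in>I. c i \<in> R) \<and>
            (\<Sum>i\<in>{i\<in>I. c i \<noteq> 0}. c i * m i) = 0 \<longrightarrow> (\<forall>i\<in>I. c i = 0))"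

definition right_double_Ore_ext ::
  "('k::field \<Rightarrow> 'a::ring_1) \<Rightarrow> 'a set \<Rightarrow> 'a \<Rightarrow> 'a \<Rightarrow> 'k \<Rightarrow> 'k \<Rightarrow> 'a \<Rightarrow> 'a \<Rightarrow> 'a \<Rightarrow> bool" where
  "right_double_Ore_ext emb R x1 x2 p12 p11 t0 t1 t2 \<longleftrightarrow>
     is_subring R \<and> K_algebra_emb emb R \<and>
     gen_subring (R \<union> {x1, x2}) = UNIV \<and>
     t0 \<in> R \<and> t1 \<in> R \<and> t2 \<in> R \<and>
     x2 * x1 = emb p12 * x1 * x2 + emb p11 * x1 ^ 2 + t1 * x1 + t2 * x2 + t0 \<and>
     free_left_basis R UNIV (\<lambda>(a, b). x1 ^ a * x2 ^ b) \<and>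
     (\<forall>r\<in>R. \<forall>xi\<in>{x1, x2}. \<exists>a\<in>R. \<exists>b\<in>R. \<exists>c\<in>R. xi * r = a * x1 + b * x2 + c)"

definition std_monomial :: "nat \<Rightarrow> (nat \<Rightarrow> 'a::ring_1) \<Rightarrow> (nat \<Rightarrow> nat) \<Rightarrow> 'a" where
  "std_monomial n x al = prod_list (map (\<lambda>i. x i ^ al i) [1..<Suc n])"

definition lin_R :: "'a::ring_1 set \<Rightarrow> nat \<Rightarrow> (nat \<Rightarrow> 'a) \<Rightarrow> 'a set" where
  "lin_R R n x = {r0 + (\<Sum>i\<in>{1..n}. r i * x i) | r0 r. r0 \<in> R \<and> (\<forall>i. r i \<in> R)}"

definition skew_PBW_ext :: "'a::ring_1 set \<Rightarrow> nat \<Rightarrow> (nat \<Rightarrow> 'a) \<Rightarrow> bool" where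
  "skew_PBW_ext R n x \<longleftrightarrow>
     is_subring R \<and>
     free_left_basis R {al. \<forall>i. i \<notin> {1..n} \<longrightarrow> al i = 0} (std_monomial n x) \<and>
     (\<forall>i\<in>{1..n}. \<forall>r\<in>R - {0}. \<exists>c\<in>R - {0}. x i * r - c * x i \<in> R) \<and>
     (\<forall>i\<in>{1..n}. \<forall>j\<in>{1..n}. \<exists>c\<in>R - {0}. x j * x i - c * x i * x j \<in> lin_R R n x)"

end

theory Submission
  imports Defs
begin

text \<open>Since \<open>\<sigma>\<close> is diagonal, \<open>x\<^sub>i r = \<sigma>\<^sub>i\<^sub>i(r) x\<^sub>i + \<delta>\<^sub>i(r)\<close> with \<open>\<sigma>\<^sub>i\<^sub>i(r) \<noteq> 0\<close> for
  \<open>r \<noteq> 0\<close>, which is condition (iii). Since \<open>p\<^sub>1\<^sub>1 = 0\<close>, the defining relation reads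
  \<open>x\<^sub>2 x\<^sub>1 = p\<^sub>1\<^sub>2 x\<^sub>1 x\<^sub>2 + (terms of degree \<le> 1)\<close>; as \<open>p\<^sub>1\<^sub>2\<close> is invertible in \<open>K\<close>, it
  can be solved for \<open>x\<^sub>1 x\<^sub>2\<close> as well, giving condition (iv) in both orders. The PBW basis
  \<open>x\<^sub>1\<^sup>a x\<^sub>2\<^sup>b\<close> becomes the basis of standard monomials once exponent vectors supported
  on \<open>{1, 2}\<close> are identified with pairs \<open>(a, b)\<close>.\<close>

lemma bij_betw_nonzero_support:
  assumes "bij_betw f J I"
  shows "bij_betw f {j\<in>J. c (f j) \<noteq> 0} {i\<in>I. c i \<noteq> 0}"
  using assms unfolding bij_betw_def inj_on_def by auto

lemma free_left_basis_reindex: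
  assumes bij: "bij_betw f J I" and basis: "free_left_basis R I m"
  shows "free_left_basis R J (m \<circ> f)"
  unfolding free_left_basis_def
proof (intro conjI allI impI)
  fix y
  obtain c where c: "finite {i\<in>I. c i \<noteq> 0}" "\<forall>i\<in>I. c i \<in> R"
    "y = (\<Sum>i\<in>{i\<in>I. c i \<noteq> 0}. c i * m i)"
    using basis unfolding free_left_basis_def by blast
  have supp: "bij_betw f {j\<in>J. c (f j) \<noteq> 0} {i\<in>I. c i \<noteq> 0}"
    using bij by (rule bij_betw_nonzero_support)
  show "\<exists>c'. finite {j\<in>J. c' j \<noteq> 0} \<and> (\<forall>j\<in>J. c' j \<in> R) \<and>
      y = (\<Sum>j\<in>{j\<in>J. c' j \<noteq> 0}. c' j * (m \<circ> f) j)"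
  proof (intro exI conjI)
    show "finite {j\<in>J. (c \<circ> f) j \<noteq> 0}"
      using bij_betw_finite[OF supp] c(1) by simp
    show "\<forall>j\<in>J. (c \<circ> f) j \<in> R"
      using c(2) bij_betwE[OF bij] by simp
    show "y = (\<Sum>j\<in>{j\<in>J. (c \<circ> f) j \<noteq> 0}. (c \<circ> f) j * (m \<circ> f) j)"
      using sum.reindex_bij_betw[OF supp, of "\<lambda>i. c i * m i"] c(3) by simp
  qed
next
  fix c
  assume c: "finite {j\<in>J. c j \<noteq> 0} \<and> (\<forall>j\<in>J. c j \<in> R) \<and>
    (\<Sum>j\<in>{j\<in>J. c j \<noteq> 0}. c j * (m \<circ> f) j) = 0"
  define c' where "c' = c \<circ> inv_into J f"
  have c'_f: "c' (f j) = c j" if "j \<in> J" for j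
    using that bij by (simp add: c'_def bij_betw_def)
  have supp_eq: "{j\<in>J. c' (f j) \<noteq> 0} = {j\<in>J. c j \<noteq> 0}"
    using c'_f by auto
  have supp: "bij_betw f {j\<in>J. c j \<noteq> 0} {i\<in>I. c' i \<noteq> 0}"
    using bij_betw_nonzero_support[OF bij, of c'] supp_eq by simp
  have "finite {i\<in>I. c' i \<noteq> 0}"
    using bij_betw_finite[OF supp] c by simp
  moreover have "\<forall>i\<in>I. c' i \<in> R"
    using c bij by (auto simp: c'_def bij_betw_def inv_into_into)
  moreover have "(\<Sum>i\<in>{i\<in>I. c' i \<noteq> 0}. c' i * m i) = 0"
    using sum.reindex_bij_betw[OF supp, of "\<lambda>i. c' i * m i"] c c'_f by simp
  ultimately have "\<forall>i\<in>I. c' i = 0"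
    using basis unfolding free_left_basis_def by blast
  then show "\<forall>j\<in>J. c j = 0"
    using c'_f bij_betwE[OF bij] by fastforce
qed

lemma std_monomial_two: "std_monomial 2 x al = x 1 ^ al 1 * x 2 ^ al 2"
  by (simp add: std_monomial_def numeral_2_eq_2)

lemma bij_betw_exponents_two:
  "bij_betw (\<lambda>al :: nat \<Rightarrow> nat. (al 1, al 2)) {al. \<forall>i. i \<notin> {1..2::nat} \<longrightarrow> al i = 0} UNIV"
  (is "bij_betw ?f ?E UNIV")
proof (rule bij_betwI')
  fix al be assume al: "al \<in> ?E" and be: "be \<in> ?E"
  have "al i = be i" if "al 1 = be 1" "al 2 = be 2" for i
    using al be that by (cases "i = 1 \<or> i = 2") auto
  then show "(?f al = ?f be) = (al = be)"
    by auto
next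
  fix p :: "nat \<times> nat"
  show "\<exists>al\<in>?E. p = ?f al"
    by (rule bexI[of _ "\<lambda>i. if i = 1 then fst p else if i = 2 then snd p else 0"]) auto
qed simp

lemma free_left_basis_std_monomial_two:
  assumes "free_left_basis R UNIV (\<lambda>(a, b). x 1 ^ a * x 2 ^ b)"
  shows "free_left_basis R {al. \<forall>i. i \<notin> {1..2} \<longrightarrow> al i = 0} (std_monomial 2 x)"
proof -
  have "std_monomial 2 x = (\<lambda>(a, b). x 1 ^ a * x 2 ^ b) \<circ> (\<lambda>al. (al 1, al 2))"
    by (simp add: fun_eq_iff std_monomial_two)
  then show ?thesis
    using free_left_basis_reindex[OF bij_betw_exponents_two assms] by simp
qed

lemma lin_R_two_memI:
  assumes "r0 \<in> R" "a \<in> R" "b \<in> R"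
  shows "r0 + a * x 1 + b * x 2 \<in> lin_R R 2 x"
proof -
  have "r0 + a * x 1 + b * x 2 = r0 + (\<Sum>i\<in>{1..2}. (if i = 1 then a else b) * x i)"
    by (simp add: numeral_2_eq_2 add.assoc)
  then show ?thesis
    unfolding lin_R_def using assms by fastforce
qed

lemma K_algebra_emb_zero:
  assumes "K_algebra_emb emb R"
  shows "emb 0 = 0"
proof -
  have "emb (0 + 0) = emb 0 + emb 0"
    using assms unfolding K_algebra_emb_def by blast
  then show ?thesis by simp
qed

lemma K_algebra_emb_inverse_mult:
  assumes "K_algebra_emb emb R" and "p \<noteq> 0"
  shows "emb (inverse p) * emb p = 1"
proof -
  have "emb (inverse p) * emb p = emb (inverse p * p)" and "emb 1 = 1"
    using assms(1) unfolding K_algebra_emb_def by metis+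
  then show ?thesis
    using assms(2) by simp
qed

lemma commutation_relation_swap:
  fixes x1 x2 u v t0 t1 t2 :: "'a::ring_1"
  assumes rel: "x2 * x1 = u * x1 * x2 + t1 * x1 + t2 * x2 + t0" and inv: "v * u = 1"
  shows "x1 * x2 - v * x2 * x1 = - (v * t0) + - (v * t1) * x1 + - (v * t2) * x2"
proof -
  have "v * x2 * x1 = (v * u) * x1 * x2 + v * t1 * x1 + v * t2 * x2 + v * t0"
    by (simp add: rel mult.assoc distrib_left)
  then show ?thesis
    using inv by (simp add: algebra_simps)
qed

lemma skew_commutation_of_diagonal:
  fixes y :: "'a::ring_1"
  assumes "\<forall>r\<in>R. y * r = s r * y + d r" and "\<forall>r\<in>R. s r \<in> R \<and> d r \<in> R"
    and "\<forall>r\<in>R - {0}. s r \<noteq> 0"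
  shows "\<forall>r\<in>R - {0}. \<exists>c\<in>R - {0}. y * r - c * y \<in> R"
proof
  fix r assume r: "r \<in> R - {0}"
  then have "y * r - s r * y = d r"
    using assms(1) by simp
  then show "\<exists>c\<in>R - {0}. y * r - c * y \<in> R"
    using r assms(2,3) by (intro bexI[of _ "s r"]) auto
qed

lemma ball_atLeastAtMost_one_two: "(\<forall>i\<in>{1..2::nat}. P i) \<longleftrightarrow> P 1 \<and> P 2"
  by (auto simp: numeral_2_eq_2 le_Suc_eq)

lemma skew_PBW_commutation_two:
  assumes "0 \<in> R" "1 \<in> R"
    and "c \<in> R - {0}" "x 2 * x 1 - c * x 1 * x 2 \<in> lin_R R 2 x"
    and "c' \<in> R - {0}" "x 1 * x 2 - c' * x 2 * x 1 \<in> lin_R R 2 x"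
  shows "\<forall>i\<in>{1..2}. \<forall>j\<in>{1..2}. \<exists>c\<in>R - {0}. x j * x i - c * x i * x j \<in> lin_R R 2 x"
proof -
  have "0 \<in> lin_R R 2 x"
    using lin_R_two_memI[of 0 R 0 0 x] \<open>0 \<in> R\<close> by simp
  then have square: "\<exists>c\<in>R - {0}. x i * x i - c * x i * x i \<in> lin_R R 2 x" for i
    using \<open>1 \<in> R\<close> by (intro bexI[of _ 1]) auto
  show ?thesis
    unfolding ball_atLeastAtMost_one_two
    using square[of 1] square[of 2] assms(3-6) by blast
qed

lemma skew_PBW_commutation_of_Ore_relation:
  assumes subring: "is_subring R" and emb: "K_algebra_emb emb R"
    and ts: "t0 \<in> R" "t1 \<in> R" "t2 \<in> R" and p: "p \<noteq> 0"
    and rel: "x 2 * x 1 = emb p * x 1 * x 2 + t1 * x 1 + t2 * x 2 + t0"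
  shows "\<forall>i\<in>{1..2}. \<forall>j\<in>{1..2}. \<exists>c\<in>R - {0}. x j * x i - c * x i * x j \<in> lin_R R 2 x"
proof -
  let ?v = "emb (inverse p)"
  have R_closed: "0 \<in> R" "1 \<in> R" "\<And>a b. a \<in> R \<Longrightarrow> b \<in> R \<Longrightarrow> - (a * b) \<in> R"
    using subring unfolding is_subring_def by blast+
  have emb_R: "\<And>c. emb c \<in> R"
    using emb unfolding K_algebra_emb_def by blast
  have inv: "?v * emb p = 1"
    using K_algebra_emb_inverse_mult[OF emb p] .
  then have units: "emb p \<in> R - {0}" "?v \<in> R - {0}"
    using emb_R by auto
  have "x 2 * x 1 - emb p * x 1 * x 2 = t0 + t1 * x 1 + t2 * x 2"
    using rel by (simp add: algebra_simps)
  then have "x 2 * x 1 - emb p * x 1 * x 2 \<in> lin_R R 2 x"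
    using lin_R_two_memI[OF ts] by simp
  moreover have "- (?v * t0) + - (?v * t1) * x 1 + - (?v * t2) * x 2 \<in> lin_R R 2 x"
    by (rule lin_R_two_memI) (use R_closed(3) emb_R ts in auto)
  then have "x 1 * x 2 - ?v * x 2 * x 1 \<in> lin_R R 2 x"
    unfolding commutation_relation_swap[OF rel inv] .
  ultimately show ?thesis
    using skew_PBW_commutation_two[OF R_closed(1,2) units(1) _ units(2)] by blast
qed

theorem theorem3p1:
  fixes emb :: "'k::field \<Rightarrow> 'a::ring_1"
    and R :: "'a set" and x1 x2 t0 t1 t2 :: 'a and p12 p11 :: 'k
    and s11 s12 s21 s22 d1 d2 :: "'a \<Rightarrow> 'a"
  assumes ore: "right_double_Ore_ext emb R x1 x2 p12 p11 t0 t1 t2"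
    and maps_in_R: "\<forall>r\<in>R. s11 r \<in> R \<and> s12 r \<in> R \<and> s21 r \<in> R \<and> s22 r \<in> R \<and> d1 r \<in> R \<and> d2 r \<in> R"
    and x1_comm: "\<forall>r\<in>R. x1 * r = s11 r * x1 + s12 r * x2 + d1 r"
    and x2_comm: "\<forall>r\<in>R. x2 * r = s21 r * x1 + s22 r * x2 + d2 r"
    and p11: "p11 = 0" and p12: "p12 \<noteq> 0"
    and diag: "\<forall>r\<in>R. s12 r = 0 \<and> s21 r = 0"
    and nz: "\<forall>r\<in>R - {0}. s11 r \<noteq> 0 \<and> s22 r \<noteq> 0"
  shows "skew_PBW_ext R 2 (\<lambda>i. if i = 1 then x1 else x2)"
proof -
  let ?x = "\<lambda>i::nat. if i = 1 then x1 else x2"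
  have subring: "is_subring R" and emb: "K_algebra_emb emb R" and ts: "t0 \<in> R" "t1 \<in> R" "t2 \<in> R"
    and rel: "?x 2 * ?x 1 = emb p12 * ?x 1 * ?x 2 + t1 * ?x 1 + t2 * ?x 2 + t0"
    and basis: "free_left_basis R UNIV (\<lambda>(a, b). ?x 1 ^ a * ?x 2 ^ b)"
    using ore K_algebra_emb_zero[of emb R] p11 unfolding right_double_Ore_ext_def by auto
  have "\<forall>r\<in>R - {0}. \<exists>c\<in>R - {0}. x1 * r - c * x1 \<in> R"
    by (rule skew_commutation_of_diagonal[where s = s11 and d = d1])
      (use x1_comm diag maps_in_R nz in auto)
  moreover have "\<forall>r\<in>R - {0}. \<exists>c\<in>R - {0}. x2 * r - c * x2 \<in> R"
    by (rule skew_commutation_of_diagonal[where s = s22 and d = d2])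
      (use x2_comm diag maps_in_R nz in auto)
  ultimately have "\<forall>i\<in>{1..2}. \<forall>r\<in>R - {0}. \<exists>c\<in>R - {0}. ?x i * r - c * ?x i \<in> R"
    unfolding ball_atLeastAtMost_one_two by simp
  then show ?thesis
    unfolding skew_PBW_ext_def
    using subring free_left_basis_std_monomial_two[OF basis]
      skew_PBW_commutation_of_Ore_relation[OF subring emb ts p12 rel] by blast
qed

end
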